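(* Let $R$ be a ring, $M$ a left $R$-module and $N$ a submodule of $M$. (1) $N$ is a completely hollow submodule of $M$ if and only if $N$ is a local module. (2) $N$ is completely strongly hollow in $M$ if and only if $N$ is a local module and strongly hollow in $M$.
   Context: $N$ is a completely hollow submodule if for every family $(K_i)_{i\in I}$ of submodules of $N$ with $\sum_i K_i=N$ there is $i$ with $K_i=N$. $N$ is completely strongly hollow in $M$ if for every family $(K_i)_{i\in I}$ of submodules of $M$ with $N\subseteq\sum_iK_i$ there is $i$ with $N\subseteq K_i$. $N$ is strongly hollow in $M$ if for all submodules $K,L$ of $M$, $N\subseteq K+L$ implies $N\subseteq K$ or $N\subseteq L$. A module is hollow if whenever it equals $K+L$ for submodules $K,L$, then $K$ or $L$ is the whole module; a local module is a nonzero cyclic hollow module. *)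

theory Defs
  imports "HOL-Algebra.Module"
begin

text \<open>Left modules over an arbitrary (not necessarily commutative) ring with unit.
  The library locale module requires a commutative ring, so we use the same
  axioms over a general ring.\<close>

locale left_module = R?: ring + M?: abelian_group M for M (structure) +
  assumes smult_closed [simp, intro]:
      "\<lbrakk>a \<in> carrier R; x \<in> carrier M\<rbrakk> \<Longrightarrow> a \<odot>\<^bsub>M\<^esub> x \<in> carrier M"
    and smult_l_distr:
      "\<lbrakk>a \<in> carrier R; b \<in> carrier R; x \<in> carrier M\<rbrakk> \<Longrightarrow>
      (a \<oplus> b) \<odot>\<^bsub>M\<^esub> x = a \<odot>\<^bsub>M\<^esub> x \<oplus>\<^bsub>M\<^esub> b \<odot>\<^bsub>M\<^esub> x"
    and smult_r_distr:
      "\<lbrakk>a \<in> carrier R; x \<in> carrier M; y \<in> carrier M\<rbrakk> \<Longrightarrow>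
      a \<odot>\<^bsub>M\<^esub> (x \<oplus>\<^bsub>M\<^esub> y) = a \<odot>\<^bsub>M\<^esub> x \<oplus>\<^bsub>M\<^esub> a \<odot>\<^bsub>M\<^esub> y"
    and smult_assoc1:
      "\<lbrakk>a \<in> carrier R; b \<in> carrier R; x \<in> carrier M\<rbrakk> \<Longrightarrow>
      (a \<otimes> b) \<odot>\<^bsub>M\<^esub> x = a \<odot>\<^bsub>M\<^esub> (b \<odot>\<^bsub>M\<^esub> x)"
    and smult_one [simp]:
      "x \<in> carrier M \<Longrightarrow> \<one> \<odot>\<^bsub>M\<^esub> x = x"

definition msum :: "('a, 'c) ring_scheme \<Rightarrow> ('a, 'b, 'd) module_scheme \<Rightarrow> 'b set set \<Rightarrow> 'b set" where
  "msum R M S = \<Inter>{H. submodule H R M \<and> \<Union>S \<subseteq> H}"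

definition msum2 :: "('a, 'b, 'd) module_scheme \<Rightarrow> 'b set \<Rightarrow> 'b set \<Rightarrow> 'b set" where
  "msum2 M K L = {k \<oplus>\<^bsub>M\<^esub> l | k l. k \<in> K \<and> l \<in> L}"

definition completely_hollow :: "('a, 'c) ring_scheme \<Rightarrow> ('a, 'b, 'd) module_scheme \<Rightarrow> 'b set \<Rightarrow> bool" where
  "completely_hollow R M N \<longleftrightarrow>
     (\<forall>S. (\<forall>K\<in>S. submodule K R M \<and> K \<subseteq> N) \<and> msum R M S = N \<longrightarrow> (\<exists>K\<in>S. K = N))"

definition completely_strongly_hollow :: "('a, 'c) ring_scheme \<Rightarrow> ('a, 'b, 'd) module_scheme \<Rightarrow> 'b set \<Rightarrow> bool" where
  "completely_strongly_hollow R M N \<longleftrightarrow>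
     (\<forall>S. (\<forall>K\<in>S. submodule K R M) \<and> N \<subseteq> msum R M S \<longrightarrow> (\<exists>K\<in>S. N \<subseteq> K))"

definition strongly_hollow :: "('a, 'c) ring_scheme \<Rightarrow> ('a, 'b, 'd) module_scheme \<Rightarrow> 'b set \<Rightarrow> bool" where
  "strongly_hollow R M N \<longleftrightarrow>
     (\<forall>K L. submodule K R M \<and> submodule L R M \<and> N \<subseteq> msum2 M K L \<longrightarrow> N \<subseteq> K \<or> N \<subseteq> L)"

definition hollow :: "('a, 'c) ring_scheme \<Rightarrow> ('a, 'b, 'd) module_scheme \<Rightarrow> 'b set \<Rightarrow> bool" where
  "hollow R M N \<longleftrightarrow>
     (\<forall>K L. submodule K R M \<and> K \<subseteq> N \<and> submodule L R M \<and> L \<subseteq> N \<and> msum2 M K L = N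
        \<longrightarrow> K = N \<or> L = N)"

definition cyclic :: "('a, 'c) ring_scheme \<Rightarrow> ('a, 'b, 'd) module_scheme \<Rightarrow> 'b set \<Rightarrow> bool" where
  "cyclic R M N \<longleftrightarrow> (\<exists>x\<in>N. N = {r \<odot>\<^bsub>M\<^esub> x | r. r \<in> carrier R})"

definition local_module :: "('a, 'c) ring_scheme \<Rightarrow> ('a, 'b, 'd) module_scheme \<Rightarrow> 'b set \<Rightarrow> bool" where
  "local_module R M N \<longleftrightarrow> N \<noteq> {\<zero>\<^bsub>M\<^esub>} \<and> cyclic R M N \<and> hollow R M N"

end

theory Submission
  imports Defs
begin

text \<open>A sum of submodules is the directed union of its finite subsums, so a cyclic submodule
  contained in the sum already lies in a finite subsum. By induction on the number of summands,
  a nonzero N that lies in one of K, L whenever it lies in K + L then lies in one summand of any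
  finite sum; for summands inside N this is hollowness, for arbitrary summands strong
  hollowness. Conversely, complete (strong) hollowness applied to the empty family, to pairs,
  and to the family of cyclic submodules Rx with x in N yields N \<noteq> 0, (strong) hollowness
  and cyclicity.\<close>

definition cyclic_submodule :: "('a, 'c) ring_scheme \<Rightarrow> ('a, 'b, 'd) module_scheme \<Rightarrow> 'b \<Rightarrow> 'b set" where
  "cyclic_submodule R M x = {r \<odot>\<^bsub>M\<^esub> x | r. r \<in> carrier R}"

lemma cyclic_iff: "cyclic R M N \<longleftrightarrow> (\<exists>x\<in>N. N = cyclic_submodule R M x)"
  unfolding cyclic_def cyclic_submodule_def ..

context left_module
begin

lemma smult_l_null [simp]:
  assumes "x \<in> carrier M"
  shows "\<zero> \<odot>\<^bsub>M\<^esub> x = \<zero>\<^bsub>M\<^esub>"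
proof -
  have "\<zero> \<odot>\<^bsub>M\<^esub> x = \<zero> \<odot>\<^bsub>M\<^esub> x \<oplus>\<^bsub>M\<^esub> \<zero> \<odot>\<^bsub>M\<^esub> x"
    using smult_l_distr[of \<zero> \<zero> x] assms by simp
  then show ?thesis
    using assms by (metis M.add.r_cancel_one' R.zero_closed smult_closed)
qed

lemma smult_r_null [simp]:
  assumes "a \<in> carrier R"
  shows "a \<odot>\<^bsub>M\<^esub> \<zero>\<^bsub>M\<^esub> = \<zero>\<^bsub>M\<^esub>"
  using smult_assoc1[of a \<zero> "\<zero>\<^bsub>M\<^esub>"] assms by simp

lemma smult_minus_one:
  assumes "x \<in> carrier M"
  shows "(\<ominus> \<one>) \<odot>\<^bsub>M\<^esub> x = \<ominus>\<^bsub>M\<^esub> x"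
proof -
  have "(\<ominus> \<one>) \<odot>\<^bsub>M\<^esub> x \<oplus>\<^bsub>M\<^esub> x = (\<ominus> \<one> \<oplus> \<one>) \<odot>\<^bsub>M\<^esub> x"
    using smult_l_distr[of "\<ominus> \<one>" \<one> x] assms by simp
  also have "\<dots> = \<zero>\<^bsub>M\<^esub>"
    using assms by (simp add: R.l_neg)
  finally show ?thesis
    using assms by (metis M.minus_equality R.add.inv_closed R.one_closed smult_closed)
qed

lemma submoduleI:
  assumes "H \<subseteq> carrier M" and "\<zero>\<^bsub>M\<^esub> \<in> H"
    and add: "\<And>a b. \<lbrakk>a \<in> H; b \<in> H\<rbrakk> \<Longrightarrow> a \<oplus>\<^bsub>M\<^esub> b \<in> H"
    and smult: "\<And>r a. \<lbrakk>r \<in> carrier R; a \<in> H\<rbrakk> \<Longrightarrow> r \<odot>\<^bsub>M\<^esub> a \<in> H"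
  shows "submodule H R M"
proof -
  have "\<ominus>\<^bsub>M\<^esub> a \<in> H" if "a \<in> H" for a
    using smult[of "\<ominus> \<one>" a] smult_minus_one[of a] that assms(1) by auto
  then show ?thesis
    by (intro submodule.intro subgroup.intro)
       (use assms in \<open>auto simp: submodule_axioms_def a_inv_def\<close>)
qed

lemma submoduleE:
  assumes "submodule H R M"
  shows "H \<subseteq> carrier M" and "\<zero>\<^bsub>M\<^esub> \<in> H"
    and "\<And>a b. \<lbrakk>a \<in> H; b \<in> H\<rbrakk> \<Longrightarrow> a \<oplus>\<^bsub>M\<^esub> b \<in> H"
    and "\<And>r a. \<lbrakk>r \<in> carrier R; a \<in> H\<rbrakk> \<Longrightarrow> r \<odot>\<^bsub>M\<^esub> a \<in> H"
  using subgroup.subset[OF submodule.axioms(1)[OF assms]]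
    subgroup.one_closed[OF submodule.axioms(1)[OF assms]]
    subgroup.m_closed[OF submodule.axioms(1)[OF assms]]
    submodule.smult_closed[OF assms]
  by auto

lemma submodule_Inter:
  assumes "\<C> \<noteq> {}" and sub: "\<And>H. H \<in> \<C> \<Longrightarrow> submodule H R M"
  shows "submodule (\<Inter>\<C>) R M"
proof (rule submoduleI)
  show "\<Inter>\<C> \<subseteq> carrier M"
    using assms submoduleE(1) by blast
  show "\<zero>\<^bsub>M\<^esub> \<in> \<Inter>\<C>"
    using sub submoduleE(2) by blast
  show "a \<oplus>\<^bsub>M\<^esub> b \<in> \<Inter>\<C>" if "a \<in> \<Inter>\<C>" "b \<in> \<Inter>\<C>" for a b
    using that sub submoduleE(3) by blast
  show "r \<odot>\<^bsub>M\<^esub> a \<in> \<Inter>\<C>" if "r \<in> carrier R" "a \<in> \<Inter>\<C>" for r a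
    using that sub submoduleE(4) by blast
qed

lemma submodule_directed_Union:
  assumes "\<C> \<noteq> {}" and sub: "\<And>H. H \<in> \<C> \<Longrightarrow> submodule H R M"
    and directed: "\<And>H H'. \<lbrakk>H \<in> \<C>; H' \<in> \<C>\<rbrakk> \<Longrightarrow> \<exists>G\<in>\<C>. H \<union> H' \<subseteq> G"
  shows "submodule (\<Union>\<C>) R M"
proof (rule submoduleI)
  show "\<Union>\<C> \<subseteq> carrier M"
    using sub submoduleE(1) by blast
  show "\<zero>\<^bsub>M\<^esub> \<in> \<Union>\<C>"
    using assms(1) sub submoduleE(2) by blast
  show "a \<oplus>\<^bsub>M\<^esub> b \<in> \<Union>\<C>" if "a \<in> \<Union>\<C>" "b \<in> \<Union>\<C>" for a b
  proof -
    from that obtain H H' where "H \<in> \<C>" "H' \<in> \<C>" "a \<in> H" "b \<in> H'"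
      by blast
    with directed obtain G where "G \<in> \<C>" "a \<in> G" "b \<in> G"
      by blast
    then show ?thesis
      using sub submoduleE(3) by blast
  qed
  show "r \<odot>\<^bsub>M\<^esub> a \<in> \<Union>\<C>" if "r \<in> carrier R" "a \<in> \<Union>\<C>" for r a
    using that sub submoduleE(4) by blast
qed

lemma submodule_zero: "submodule {\<zero>\<^bsub>M\<^esub>} R M"
  by (rule submoduleI) auto

lemma submodule_carrier: "submodule (carrier M) R M"
  by (rule submoduleI) auto

lemma cyclic_submodule_submodule:
  assumes x: "x \<in> carrier M"
  shows "submodule (cyclic_submodule R M x) R M"
proof (rule submoduleI)
  show "cyclic_submodule R M x \<subseteq> carrier M"
    unfolding cyclic_submodule_def using x by blast
  show "\<zero>\<^bsub>M\<^esub> \<in> cyclic_submodule R M x"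
  proof -
    have "\<zero>\<^bsub>M\<^esub> = \<zero> \<odot>\<^bsub>M\<^esub> x"
      using x by simp
    then show ?thesis
      unfolding cyclic_submodule_def by blast
  qed
  show "a \<oplus>\<^bsub>M\<^esub> b \<in> cyclic_submodule R M x"
    if ab: "a \<in> cyclic_submodule R M x" "b \<in> cyclic_submodule R M x" for a b
  proof -
    obtain r s where "r \<in> carrier R" "s \<in> carrier R" "a = r \<odot>\<^bsub>M\<^esub> x" "b = s \<odot>\<^bsub>M\<^esub> x"
      using ab unfolding cyclic_submodule_def by blast
    then have "a \<oplus>\<^bsub>M\<^esub> b = (r \<oplus> s) \<odot>\<^bsub>M\<^esub> x" and "r \<oplus> s \<in> carrier R"
      using smult_l_distr[of r s x] x by simp_all
    then show ?thesis
      unfolding cyclic_submodule_def by blast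
  qed
  show "s \<odot>\<^bsub>M\<^esub> a \<in> cyclic_submodule R M x"
    if s: "s \<in> carrier R" and a: "a \<in> cyclic_submodule R M x" for s a
  proof -
    obtain r where "r \<in> carrier R" "a = r \<odot>\<^bsub>M\<^esub> x"
      using a unfolding cyclic_submodule_def by blast
    then have "s \<odot>\<^bsub>M\<^esub> a = (s \<otimes> r) \<odot>\<^bsub>M\<^esub> x" and "s \<otimes> r \<in> carrier R"
      using smult_assoc1[of s r x] x s by simp_all
    then show ?thesis
      unfolding cyclic_submodule_def by blast
  qed
qed

lemma cyclic_submodule_least:
  assumes "submodule H R M" and "x \<in> H"
  shows "cyclic_submodule R M x \<subseteq> H"
  using submoduleE(4)[OF assms(1)] assms(2) unfolding cyclic_submodule_def by blast

lemma mem_cyclic_submodule: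
  assumes "x \<in> carrier M"
  shows "x \<in> cyclic_submodule R M x"
proof -
  have "x = \<one> \<odot>\<^bsub>M\<^esub> x"
    using assms by simp
  then show ?thesis
    unfolding cyclic_submodule_def by blast
qed

lemma msum2_submodule:
  assumes K: "submodule K R M" and L: "submodule L R M"
  shows "submodule (msum2 M K L) R M"
proof (rule submoduleI)
  show "msum2 M K L \<subseteq> carrier M"
    unfolding msum2_def using submoduleE(1)[OF K] submoduleE(1)[OF L] by blast
  have "\<zero>\<^bsub>M\<^esub> = \<zero>\<^bsub>M\<^esub> \<oplus>\<^bsub>M\<^esub> \<zero>\<^bsub>M\<^esub>"
    by simp
  then show "\<zero>\<^bsub>M\<^esub> \<in> msum2 M K L"
    unfolding msum2_def using submoduleE(2)[OF K] submoduleE(2)[OF L] by blast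
  show "a \<oplus>\<^bsub>M\<^esub> b \<in> msum2 M K L" if ab: "a \<in> msum2 M K L" "b \<in> msum2 M K L" for a b
  proof -
    obtain k l k' l' where kl: "k \<in> K" "l \<in> L" "a = k \<oplus>\<^bsub>M\<^esub> l"
      and kl': "k' \<in> K" "l' \<in> L" "b = k' \<oplus>\<^bsub>M\<^esub> l'"
      using ab unfolding msum2_def by blast
    then have "a \<oplus>\<^bsub>M\<^esub> b = (k \<oplus>\<^bsub>M\<^esub> k') \<oplus>\<^bsub>M\<^esub> (l \<oplus>\<^bsub>M\<^esub> l')"
      using submoduleE(1)[OF K] submoduleE(1)[OF L] by (simp add: subsetD M.a_ac)
    then show ?thesis
      unfolding msum2_def using kl kl' submoduleE(3)[OF K] submoduleE(3)[OF L] by blast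
  qed
  show "r \<odot>\<^bsub>M\<^esub> a \<in> msum2 M K L" if r: "r \<in> carrier R" and a: "a \<in> msum2 M K L" for r a
  proof -
    obtain k l where kl: "k \<in> K" "l \<in> L" "a = k \<oplus>\<^bsub>M\<^esub> l"
      using a unfolding msum2_def by blast
    then have "r \<odot>\<^bsub>M\<^esub> a = r \<odot>\<^bsub>M\<^esub> k \<oplus>\<^bsub>M\<^esub> r \<odot>\<^bsub>M\<^esub> l"
      using submoduleE(1)[OF K] submoduleE(1)[OF L] r by (simp add: subsetD smult_r_distr)
    then show ?thesis
      unfolding msum2_def using kl r submoduleE(4)[OF K] submoduleE(4)[OF L] by blast
  qed
qed

lemma msum2_upper:
  assumes K: "submodule K R M" and L: "submodule L R M"
  shows "K \<subseteq> msum2 M K L" and "L \<subseteq> msum2 M K L"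
proof -
  have "k = k \<oplus>\<^bsub>M\<^esub> \<zero>\<^bsub>M\<^esub>" if "k \<in> K" for k
    using that submoduleE(1)[OF K] by auto
  then show "K \<subseteq> msum2 M K L"
    unfolding msum2_def using submoduleE(2)[OF L] by blast
  have "l = \<zero>\<^bsub>M\<^esub> \<oplus>\<^bsub>M\<^esub> l" if "l \<in> L" for l
    using that submoduleE(1)[OF L] by auto
  then show "L \<subseteq> msum2 M K L"
    unfolding msum2_def using submoduleE(2)[OF K] by blast
qed

lemma msum2_least:
  assumes "submodule H R M" and "K \<subseteq> H" and "L \<subseteq> H"
  shows "msum2 M K L \<subseteq> H"
  unfolding msum2_def using submoduleE(3)[OF assms(1)] assms(2,3) by blast

lemma msum_submodule:
  assumes "\<And>K. K \<in> S \<Longrightarrow> submodule K R M"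
  shows "submodule (msum R M S) R M"
  unfolding msum_def
proof (rule submodule_Inter)
  have "\<Union>S \<subseteq> carrier M"
    using assms submoduleE(1) by blast
  then show "{H. submodule H R M \<and> \<Union>S \<subseteq> H} \<noteq> {}"
    using submodule_carrier by blast
qed blast

lemma msum_upper: "K \<in> S \<Longrightarrow> K \<subseteq> msum R M S"
  unfolding msum_def by blast

lemma msum_least: "\<lbrakk>submodule H R M; \<Union>S \<subseteq> H\<rbrakk> \<Longrightarrow> msum R M S \<subseteq> H"
  unfolding msum_def by blast

lemma msum_mono:
  assumes "\<And>K. K \<in> T \<Longrightarrow> submodule K R M" and "S \<subseteq> T"
  shows "msum R M S \<subseteq> msum R M T"
proof (rule msum_least)
  show "submodule (msum R M T) R M"
    using assms(1) by (rule msum_submodule)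
  show "\<Union>S \<subseteq> msum R M T"
    using assms(2) msum_upper[of _ T] by blast
qed

lemma msum_empty: "msum R M {} = {\<zero>\<^bsub>M\<^esub>}"
proof
  show "msum R M {} \<subseteq> {\<zero>\<^bsub>M\<^esub>}"
    using submodule_zero by (rule msum_least) simp
  show "{\<zero>\<^bsub>M\<^esub>} \<subseteq> msum R M {}"
    using submoduleE(2)[OF msum_submodule[of "{}"]] by simp
qed

lemma msum_insert:
  assumes K: "submodule K R M" and F: "\<And>H. H \<in> F \<Longrightarrow> submodule H R M"
  shows "msum R M (insert K F) = msum2 M K (msum R M F)"
proof
  have KF: "\<And>H. H \<in> insert K F \<Longrightarrow> submodule H R M"
    using K F by blast
  have sumF: "submodule (msum R M F) R M"
    using F by (rule msum_submodule)
  show "msum R M (insert K F) \<subseteq> msum2 M K (msum R M F)"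
  proof (rule msum_least)
    show "submodule (msum2 M K (msum R M F)) R M"
      using K sumF by (rule msum2_submodule)
    show "\<Union>(insert K F) \<subseteq> msum2 M K (msum R M F)"
      using msum2_upper[OF K sumF] msum_upper[of _ F] by blast
  qed
  show "msum2 M K (msum R M F) \<subseteq> msum R M (insert K F)"
  proof (rule msum2_least)
    show "submodule (msum R M (insert K F)) R M"
      using KF by (rule msum_submodule)
    show "K \<subseteq> msum R M (insert K F)"
      by (rule msum_upper) simp
    show "msum R M F \<subseteq> msum R M (insert K F)"
      by (rule msum_mono[OF KF subset_insertI])
  qed
qed

lemma msum_pair:
  assumes "submodule K R M" and "submodule L R M"
  shows "msum R M {K, L} = msum2 M K L"
proof -
  have "msum R M {L} = L"
    using msum_upper[of L "{L}"] msum_least[OF assms(2), of "{L}"] by blast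
  then show ?thesis
    using msum_insert[of K "{L}"] assms by simp
qed

text \<open>The sums over finite subfamilies form a directed family of submodules, so their union is
  a submodule and hence contains the whole sum.\<close>

lemma msum_finite_subfamily:
  assumes S: "\<And>K. K \<in> S \<Longrightarrow> submodule K R M" and x: "x \<in> msum R M S"
  shows "\<exists>F. finite F \<and> F \<subseteq> S \<and> x \<in> msum R M F"
proof -
  define \<C> where "\<C> = {msum R M F | F. finite F \<and> F \<subseteq> S}"
  have sub: "submodule H R M" if "H \<in> \<C>" for H
    using that S unfolding \<C>_def by (auto intro: msum_submodule)
  have directed: "\<exists>G\<in>\<C>. H \<union> H' \<subseteq> G" if HH': "H \<in> \<C>" "H' \<in> \<C>" for H H'
  proof -
    obtain F F' where F: "finite F" "F \<subseteq> S" "H = msum R M F"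
      and F': "finite F'" "F' \<subseteq> S" "H' = msum R M F'"
      using HH' unfolding \<C>_def by blast
    have "\<And>K. K \<in> F \<union> F' \<Longrightarrow> submodule K R M"
      using F(2) F'(2) S by blast
    then have "H \<union> H' \<subseteq> msum R M (F \<union> F')"
      using F(3) F'(3) msum_mono by (metis Un_least sup.cobounded1 sup.cobounded2)
    moreover have "msum R M (F \<union> F') \<in> \<C>"
      using F F' unfolding \<C>_def by blast
    ultimately show ?thesis
      by blast
  qed
  have "msum R M {} \<in> \<C>"
    unfolding \<C>_def by blast
  then have "submodule (\<Union>\<C>) R M"
    using sub directed by (intro submodule_directed_Union) blast+
  moreover have "\<Union>S \<subseteq> \<Union>\<C>"
  proof
    fix y assume "y \<in> \<Union>S"
    then obtain K where "K \<in> S" "y \<in> K"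
      by blast
    then have "y \<in> msum R M {K}" and "msum R M {K} \<in> \<C>"
      using msum_upper[of K "{K}"] unfolding \<C>_def by blast+
    then show "y \<in> \<Union>\<C>"
      by blast
  qed
  ultimately have "x \<in> \<Union>\<C>"
    using x msum_least by blast
  then show ?thesis
    unfolding \<C>_def by blast
qed

lemma cyclic_subfamily_cover:
  assumes "cyclic R M N" and S: "\<And>K. K \<in> S \<Longrightarrow> submodule K R M" and "N \<subseteq> msum R M S"
  shows "\<exists>F. finite F \<and> F \<subseteq> S \<and> N \<subseteq> msum R M F"
proof -
  obtain x where x: "x \<in> N" "N = cyclic_submodule R M x"
    using assms(1) unfolding cyclic_iff by blast
  with assms(3) have "x \<in> msum R M S"
    by blast
  then obtain F where F: "finite F" "F \<subseteq> S" "x \<in> msum R M F"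
    using msum_finite_subfamily[OF S] by blast
  have "submodule (msum R M F) R M"
    using F(2) S by (intro msum_submodule) blast
  then have "N \<subseteq> msum R M F"
    unfolding x(2) using F(3) by (rule cyclic_submodule_least)
  with F(1,2) show ?thesis
    by blast
qed

subsection \<open>Covering a submodule by a single member of a family\<close>

text \<open>The ambient submodule A is N itself for hollow N and carrier M for strongly hollow N.\<close>

lemma finite_cover_member:
  assumes A: "submodule A R M" and N: "submodule N R M" and nonzero: "N \<noteq> {\<zero>\<^bsub>M\<^esub>}"
    and split: "\<And>K L. \<lbrakk>submodule K R M; K \<subseteq> A; submodule L R M; L \<subseteq> A; N \<subseteq> msum2 M K L\<rbrakk>
      \<Longrightarrow> N \<subseteq> K \<or> N \<subseteq> L"
    and "finite F" and "\<And>K. K \<in> F \<Longrightarrow> submodule K R M \<and> K \<subseteq> A" and "N \<subseteq> msum R M F"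
  shows "\<exists>K\<in>F. N \<subseteq> K"
  using assms(5-7)
proof (induction F rule: finite_induct)
  case empty
  then have "N = {\<zero>\<^bsub>M\<^esub>}"
    using submoduleE(2)[OF N] msum_empty by blast
  with nonzero show ?case
    by contradiction
next
  case (insert K F)
  have K: "submodule K R M" "K \<subseteq> A" and F: "\<And>H. H \<in> F \<Longrightarrow> submodule H R M \<and> H \<subseteq> A"
    using insert.prems(1) by blast+
  have sumF: "submodule (msum R M F) R M"
    using F by (blast intro: msum_submodule)
  have sumF_A: "msum R M F \<subseteq> A"
    by (rule msum_least[OF A]) (use F in blast)
  have "N \<subseteq> msum2 M K (msum R M F)"
    using insert.prems(2) msum_insert[OF K(1)] F by simp
  then have "N \<subseteq> K \<or> N \<subseteq> msum R M F"
    by (rule split[OF K sumF sumF_A])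
  moreover have "N \<subseteq> msum R M F \<Longrightarrow> \<exists>H\<in>F. N \<subseteq> H"
    using insert.IH F by simp
  ultimately show ?case
    by blast
qed

lemma cyclic_cover_member:
  assumes "submodule A R M" and "submodule N R M" and "N \<noteq> {\<zero>\<^bsub>M\<^esub>}" and "cyclic R M N"
    and "\<And>K L. \<lbrakk>submodule K R M; K \<subseteq> A; submodule L R M; L \<subseteq> A; N \<subseteq> msum2 M K L\<rbrakk>
      \<Longrightarrow> N \<subseteq> K \<or> N \<subseteq> L"
    and S: "\<And>K. K \<in> S \<Longrightarrow> submodule K R M \<and> K \<subseteq> A" and "N \<subseteq> msum R M S"
  shows "\<exists>K\<in>S. N \<subseteq> K"
proof -
  obtain F where F: "finite F" "F \<subseteq> S" "N \<subseteq> msum R M F"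
    using cyclic_subfamily_cover[OF assms(4) _ assms(7)] S by blast
  have "\<exists>K\<in>F. N \<subseteq> K"
    by (rule finite_cover_member[OF assms(1-3,5) F(1) S[OF subsetD[OF F(2)]] F(3)])
  with F(2) show ?thesis
    by blast
qed

lemma hollow_split:
  assumes N: "submodule N R M" and hollow: "hollow R M N"
    and K: "submodule K R M" "K \<subseteq> N" and L: "submodule L R M" "L \<subseteq> N"
    and "N \<subseteq> msum2 M K L"
  shows "N \<subseteq> K \<or> N \<subseteq> L"
proof -
  have "msum2 M K L = N"
    using msum2_least[OF N K(2) L(2)] assms(7) by blast
  then have "K = N \<or> L = N"
    using hollow K L unfolding hollow_def by simp
  then show ?thesis
    by blast
qed

subsection \<open>Completely hollow submodules\<close>

lemma local_module_imp_completely_hollow: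
  assumes N: "submodule N R M" and "local_module R M N"
  shows "completely_hollow R M N"
  unfolding completely_hollow_def
proof (intro allI impI)
  fix S assume S: "(\<forall>K\<in>S. submodule K R M \<and> K \<subseteq> N) \<and> msum R M S = N"
  have nonzero: "N \<noteq> {\<zero>\<^bsub>M\<^esub>}" and cyclic: "cyclic R M N" and hollow: "hollow R M N"
    using assms(2) unfolding local_module_def by simp_all
  have "\<exists>K\<in>S. N \<subseteq> K"
  proof (rule cyclic_cover_member[OF N N nonzero cyclic])
    show "N \<subseteq> K \<or> N \<subseteq> L"
      if "submodule K R M" "K \<subseteq> N" "submodule L R M" "L \<subseteq> N" "N \<subseteq> msum2 M K L" for K L
      using hollow_split[OF N hollow that] .
    show "submodule K R M \<and> K \<subseteq> N" if "K \<in> S" for K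
      using S that by simp
    show "N \<subseteq> msum R M S"
      using S by simp
  qed
  then obtain K where "K \<in> S" "N \<subseteq> K"
    by blast
  moreover have "K \<subseteq> N"
    using S \<open>K \<in> S\<close> by simp
  ultimately show "\<exists>K\<in>S. K = N"
    by (intro bexI[of _ K]) simp_all
qed

lemma completely_hollow_imp_local_module:
  assumes N: "submodule N R M" and "completely_hollow R M N"
  shows "local_module R M N"
proof -
  have ch: "\<exists>K\<in>S. K = N" if "\<And>K. K \<in> S \<Longrightarrow> submodule K R M \<and> K \<subseteq> N" "msum R M S = N" for S
    using assms(2) that unfolding completely_hollow_def by simp
  have "N \<noteq> {\<zero>\<^bsub>M\<^esub>}"
  proof
    assume "N = {\<zero>\<^bsub>M\<^esub>}"
    then have "\<exists>K\<in>{}. K = N"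
      by (intro ch) (simp_all add: msum_empty)
    then show False
      by simp
  qed
  moreover have "cyclic R M N"
  proof -
    let ?S = "cyclic_submodule R M ` N"
    have S: "submodule K R M \<and> K \<subseteq> N" if K: "K \<in> ?S" for K
    proof -
      obtain x where "x \<in> N" "K = cyclic_submodule R M x"
        using K by blast
      then show ?thesis
        using submoduleE(1)[OF N] cyclic_submodule_submodule cyclic_submodule_least[OF N] by auto
    qed
    have "x \<in> msum R M ?S" if "x \<in> N" for x
      using that submoduleE(1)[OF N] mem_cyclic_submodule msum_upper[of _ ?S] by blast
    then have "msum R M ?S = N"
      using msum_least[OF N, of ?S] S by auto
    then have "\<exists>K\<in>?S. K = N"
      using S by (intro ch)
    then show ?thesis
      unfolding cyclic_iff by auto
  qed
  moreover have "hollow R M N"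
    unfolding hollow_def
  proof (intro allI impI)
    fix K L assume KL: "submodule K R M \<and> K \<subseteq> N \<and> submodule L R M \<and> L \<subseteq> N \<and> msum2 M K L = N"
    then have "\<exists>H\<in>{K, L}. H = N"
      by (intro ch) (auto simp: msum_pair)
    then show "K = N \<or> L = N"
      by blast
  qed
  ultimately show ?thesis
    unfolding local_module_def by simp
qed

subsection \<open>Completely strongly hollow submodules\<close>

lemma completely_strongly_hollow_imp_strongly_hollow:
  assumes "completely_strongly_hollow R M N"
  shows "strongly_hollow R M N"
  unfolding strongly_hollow_def
proof (intro allI impI)
  fix K L assume KL: "submodule K R M \<and> submodule L R M \<and> N \<subseteq> msum2 M K L"
  then have "N \<subseteq> msum R M {K, L}"
    by (simp add: msum_pair)
  with KL have "\<exists>H\<in>{K, L}. N \<subseteq> H"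
    using spec[OF assms[unfolded completely_strongly_hollow_def], of "{K, L}"] by simp
  then show "N \<subseteq> K \<or> N \<subseteq> L"
    by simp
qed

lemma completely_strongly_hollow_imp_completely_hollow:
  assumes "completely_strongly_hollow R M N"
  shows "completely_hollow R M N"
  unfolding completely_hollow_def
proof (intro allI impI)
  fix S assume S: "(\<forall>K\<in>S. submodule K R M \<and> K \<subseteq> N) \<and> msum R M S = N"
  then obtain K where "K \<in> S" "N \<subseteq> K"
    using assms unfolding completely_strongly_hollow_def by force
  moreover have "K \<subseteq> N"
    using S \<open>K \<in> S\<close> by simp
  ultimately show "\<exists>K\<in>S. K = N"
    by (intro bexI[of _ K]) simp_all
qed

lemma local_strongly_hollow_imp_completely_strongly_hollow:
  assumes N: "submodule N R M" and "local_module R M N" and sh: "strongly_hollow R M N"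
  shows "completely_strongly_hollow R M N"
  unfolding completely_strongly_hollow_def
proof (intro allI impI)
  fix S assume S: "(\<forall>K\<in>S. submodule K R M) \<and> N \<subseteq> msum R M S"
  have nonzero: "N \<noteq> {\<zero>\<^bsub>M\<^esub>}" and cyclic: "cyclic R M N"
    using assms(2) unfolding local_module_def by simp_all
  show "\<exists>K\<in>S. N \<subseteq> K"
  proof (rule cyclic_cover_member[OF submodule_carrier N nonzero cyclic])
    show "N \<subseteq> K \<or> N \<subseteq> L"
      if "submodule K R M" "K \<subseteq> carrier M" "submodule L R M" "L \<subseteq> carrier M" "N \<subseteq> msum2 M K L"
      for K L
      using sh that unfolding strongly_hollow_def by simp
    show "submodule K R M \<and> K \<subseteq> carrier M" if "K \<in> S" for K
      using S that submoduleE(1) by simp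
    show "N \<subseteq> msum R M S"
      using S by simp
  qed
qed

end

theorem lemma2p3:
  fixes R :: "('a, 'c) ring_scheme" and M :: "('a, 'b, 'd) module_scheme" and N :: "'b set"
  assumes "left_module R M" and "submodule N R M"
  shows "(completely_hollow R M N \<longleftrightarrow> local_module R M N)
     \<and> (completely_strongly_hollow R M N \<longleftrightarrow> local_module R M N \<and> strongly_hollow R M N)"
proof -
  interpret left_module R M
    by (fact assms(1))
  show ?thesis
    using local_module_imp_completely_hollow[OF assms(2)]
      completely_hollow_imp_local_module[OF assms(2)]
      completely_strongly_hollow_imp_completely_hollow
      completely_strongly_hollow_imp_strongly_hollow
      local_strongly_hollow_imp_completely_strongly_hollow[OF assms(2)]
    by blast
qed

end
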